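(* Let $G$ be an abelian group and $A\subseteq G$ a finite set with at least $2$ elements. Then, for each choice of sign, $$\sum_{s\neq 0} |A\pm A_s| \ge 2^{-1} |A|^6 \mathsf{E}_3(A)^{-1} \quad\text{and}\quad \sum_{s\neq 0} \sum_{t\neq 0} |A_s\pm A_t| \ge 4^{-1} |A|^8 \mathsf{E}_4(A)^{-1},$$ where the sums range over $s,t\in (A-A)\setminus\{0\}$. In particular, there exists $s\neq 0$ with $|A-A_s| \ge 2^{-1}|A|^6\mathsf{E}_3(A)^{-1}|A-A|^{-1}$, and there exist $s,t\neq 0$ with $|A_s-A_t| \ge 4^{-1}|A|^8\mathsf{E}_4(A)^{-1}|A-A|^{-2}$.
   Context: For finite $A\subseteq G$, $(A\circ A)(x)=|\{y: y\in A,\ y+x\in A\}|$; for $s\in G$, $A_s=A\cap(A-s)$. $\mathsf{E}_3(A)=\sum_s (A\circ A)(s)^3$ and $\mathsf{E}_4(A)=\sum_s (A\circ A)(s)^4$. $X\pm Y$ denotes $\{x\pm y: x\in X, y\in Y\}$. *)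

theory Defs
  imports Complex_Main
begin

definition sumset :: "'a::ab_group_add set \<Rightarrow> 'a set \<Rightarrow> 'a set" where
  "sumset X Y = {x + y | x y. x \<in> X \<and> y \<in> Y}"

definition diffset :: "'a::ab_group_add set \<Rightarrow> 'a set \<Rightarrow> 'a set" where
  "diffset X Y = {x - y | x y. x \<in> X \<and> y \<in> Y}"

definition rep :: "'a::ab_group_add set \<Rightarrow> 'a \<Rightarrow> nat" where
  "rep A x = card {y. y \<in> A \<and> y + x \<in> A}"

definition Ash :: "'a::ab_group_add set \<Rightarrow> 'a \<Rightarrow> 'a set" where
  "Ash A s = A \<inter> ((\<lambda>a. a - s) ` A)"

(* The sums over s \<in> G are taken over A - A, outside of which rep A vanishes. *)
definition E3 :: "'a::ab_group_add set \<Rightarrow> nat" where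
  "E3 A = (\<Sum>s\<in>diffset A A. rep A s ^ 3)"

definition E4 :: "'a::ab_group_add set \<Rightarrow> nat" where
  "E4 A = (\<Sum>s\<in>diffset A A. rep A s ^ 4)"

end

(*
  Write n = |A| and r = A \<circ> A, so that |A\<^sub>s| = r(s). For fixed s, Cauchy-Schwarz over the
  fibres of (a, b) \<mapsto> a \<plusminus> b on A \<times> A\<^sub>s gives n\<^sup>2 r(s)\<^sup>2 \<le> |A \<plusminus> A\<^sub>s| Q(s), where Q(s) counts the
  solutions of a \<plusminus> b = a' \<plusminus> b'; Cauchy-Schwarz over s \<noteq> 0 then bounds (\<Sum>\<^sub>s n r(s))\<^sup>2 = n\<^sup>4(n-1)\<^sup>2 by
  (\<Sum>\<^sub>s |A \<plusminus> A\<^sub>s|)(\<Sum>\<^sub>s Q(s)). A pair b, b' \<in> A lies in exactly r(b'-b) - 1 of the sets A\<^sub>s with s \<noteq> 0,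
  so \<Sum>\<^sub>s Q(s) = \<Sum>\<^sub>b\<^sub>,\<^sub>b\<^sub>' r(b'-b)(r(b'-b) - 1) \<le> (1 - 1/n) E\<^sub>3(A), as r \<le> n. For A\<^sub>s \<plusminus> A\<^sub>t the same double
  count is applied in both variables and yields (1 - 1/n)\<^sup>2 E\<^sub>4(A). The existence statements follow
  by averaging over at most |A - A| (resp. |A - A|\<^sup>2) terms.
*)

theory Submission
  imports Defs "HOL-Analysis.Convex"
begin

lemma card_squared_le_card_image_mult_collisions:
  assumes "finite S"
  shows "real (card S)^2 \<le> real (card (f ` S)) * (\<Sum>p\<in>S. \<Sum>q\<in>S. of_bool (f p = f q))"
proof -
  define c where "c z = real (card {p \<in> S. f p = z})" for z
  have sum_over_fibres: "(\<Sum>p\<in>S. g (f p)) = (\<Sum>z\<in>f ` S. c z * g z)" for g :: "_ \<Rightarrow> real"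
    unfolding sum.image_gen[OF assms, of "\<lambda>p. g (f p)" f] c_def
    by (intro sum.cong refl) simp
  have "real (card S) = (\<Sum>z\<in>f ` S. c z)"
    using sum_over_fibres[of "\<lambda>_. 1"] by simp
  moreover have "(\<Sum>p\<in>S. \<Sum>q\<in>S. of_bool (f p = f q)) = (\<Sum>z\<in>f ` S. (c z)^2)"
  proof -
    have "(\<Sum>q\<in>S. of_bool (z = f q)) = c z" for z
      using assms by (simp add: c_def eq_commute Int_def flip: sum.inter_filter)
    then show ?thesis
      using sum_over_fibres[of c] by (simp add: power2_eq_square)
  qed
  ultimately show ?thesis
    using sum_squared_le_sum_of_squares[of c "f ` S"] by (simp add: mult.commute)
qed

lemma Cauchy_Schwarz_ineq_sum_pointwise:
  fixes a X Y :: "'i \<Rightarrow> real"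
  assumes "\<And>i. i \<in> I \<Longrightarrow> 0 \<le> a i" "\<And>i. i \<in> I \<Longrightarrow> 0 \<le> X i" "\<And>i. i \<in> I \<Longrightarrow> 0 \<le> Y i"
    and "\<And>i. i \<in> I \<Longrightarrow> (a i)^2 \<le> X i * Y i"
  shows "(\<Sum>i\<in>I. a i)^2 \<le> (\<Sum>i\<in>I. X i) * (\<Sum>i\<in>I. Y i)"
proof -
  have "(\<Sum>i\<in>I. a i) \<le> (\<Sum>i\<in>I. sqrt (X i) * sqrt (Y i))"
    using assms by (intro sum_mono) (metis real_le_rsqrt real_sqrt_mult)
  then have "(\<Sum>i\<in>I. a i)^2 \<le> (\<Sum>i\<in>I. sqrt (X i) * sqrt (Y i))^2"
    using assms(1) by (intro power_mono) (simp_all add: sum_nonneg)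
  also have "\<dots> \<le> (\<Sum>i\<in>I. (sqrt (X i))^2) * (\<Sum>i\<in>I. (sqrt (Y i))^2)"
    by (rule Cauchy_Schwarz_ineq_sum)
  also have "\<dots> = (\<Sum>i\<in>I. X i) * (\<Sum>i\<in>I. Y i)"
    using assms(2,3) by (simp cong: sum.cong)
  finally show ?thesis .
qed

lemma exists_ge_average:
  fixes X :: "'i \<Rightarrow> real"
  assumes "finite I" "I \<noteq> {}" "real (card I) \<le> K" "0 \<le> B" "B \<le> (\<Sum>i\<in>I. X i)"
  shows "\<exists>i\<in>I. B / K \<le> X i"
proof (rule ccontr)
  assume "\<not> ?thesis"
  have "0 < K"
    using assms(1-3) card_gt_0_iff[of I] by linarith
  from \<open>\<not> ?thesis\<close> have "(\<Sum>i\<in>I. X i) < (\<Sum>i\<in>I. B / K)"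
    using assms(1,2) by (intro sum_strict_mono) auto
  also have "\<dots> = real (card I) * (B / K)"
    by simp
  also have "\<dots> \<le> K * (B / K)"
    using assms(3,4) \<open>0 < K\<close> by (intro mult_right_mono) simp_all
  also have "\<dots> = B"
    using \<open>0 < K\<close> by simp
  finally show False
    using assms(5) by simp
qed

lemma pred_ratio_power_le:
  fixes n r :: real
  assumes "1 \<le> r" "r \<le> n"
  shows "n^k * ((r - 1)^k * r) \<le> (n - 1)^k * r^(k + 1)"
proof -
  have "(n * (r - 1))^k \<le> ((n - 1) * r)^k"
    using assms by (intro power_mono) (simp_all add: algebra_simps)
  then have "(n * (r - 1))^k * r \<le> ((n - 1) * r)^k * r"
    using assms by (intro mult_right_mono) auto
  then show ?thesis
    by (simp add: power_mult_distrib mult_ac)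
qed

lemma le_of_Cauchy_Schwarz_and_energy_bounds:
  fixes n S P E :: real
  assumes "2 \<le> n" "0 \<le> S" "0 \<le> E"
    and Cauchy_Schwarz: "(n^2 * (n - 1)^k)^2 \<le> S * P"
    and energy: "n^k * P \<le> (n - 1)^k * E"
  shows "n^(2 * k + 4) / (2^k * E) \<le> S"
proof -
  have "(n - 1)^k * (n^(k + 4) * (n - 1)^k) = n^k * (n^2 * (n - 1)^k)^2"
    by (simp add: power_add power2_eq_square power4_eq_xxxx mult_ac)
  also have "\<dots> \<le> n^k * (S * P)"
    using assms(1) by (intro mult_left_mono[OF Cauchy_Schwarz]) simp
  also have "\<dots> \<le> (n - 1)^k * (S * E)"
    using mult_left_mono[OF energy \<open>0 \<le> S\<close>] by (simp add: mult_ac)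
  finally have "n^(k + 4) * (n - 1)^k \<le> S * E"
    using assms(1) by (simp add: mult_le_cancel_left)
  then have "n^(2 * k + 4) \<le> 2^k * (S * E)"
  proof -
    have "n^(2 * k + 4) = n^k * n^(k + 4)"
      by (simp add: power_add[symmetric])
    also have "\<dots> \<le> (2 * (n - 1))^k * n^(k + 4)"
      using assms(1) by (intro mult_right_mono power_mono) simp_all
    also have "\<dots> = 2^k * (n^(k + 4) * (n - 1)^k)"
      by (simp only: power_mult_distrib mult_ac)
    also have "\<dots> \<le> 2^k * (S * E)"
      using \<open>n^(k + 4) * (n - 1)^k \<le> S * E\<close> by simp
    finally show ?thesis .
  qed
  \<comment> \<open>for \<open>E = 0\<close> the left-hand side is \<open>0\<close>, as \<open>x / 0 = 0\<close>\<close>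
  then show ?thesis
    using assms(2,3) by (cases "E = 0") (simp_all add: pos_divide_le_eq mult_ac)
qed

lemma Ash_eq: "Ash A s = {b \<in> A. b + s \<in> A}"
  unfolding Ash_def by (auto simp: image_iff eq_diff_eq)

lemma finite_Ash: "finite A \<Longrightarrow> finite (Ash A s)"
  by (simp add: Ash_def)

lemma card_Ash: "card (Ash A s) = rep A s"
  by (simp add: Ash_eq rep_def)

lemma finite_diffset:
  assumes "finite X" "finite Y"
  shows "finite (diffset X Y)"
proof -
  have "diffset X Y = (\<lambda>(x, y). x - y) ` (X \<times> Y)"
    unfolding diffset_def by auto
  then show ?thesis
    using assms by simp
qed

lemma nonzero_diffs_nonempty:
  assumes "2 \<le> card A"
  shows "diffset A A - {0} \<noteq> {}"
proof -
  obtain a b where "a \<in> A" "b \<in> A" "a \<noteq> b"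
    using assms by (metis obtain_subset_with_card_n card_2_iff insert_subset)
  then show ?thesis
    unfolding diffset_def by force
qed

lemma rep_zero: "rep A 0 = card A"
  by (simp add: rep_def)

lemma rep_le_card: "finite A \<Longrightarrow> rep A d \<le> card A"
  unfolding rep_def by (rule card_mono) auto

lemma rep_diff_pos: "finite A \<Longrightarrow> b \<in> A \<Longrightarrow> b' \<in> A \<Longrightarrow> 0 < rep A (b' - b)"
  unfolding rep_def by (subst card_gt_0_iff) auto

lemma rep_uminus: "rep A (- d) = rep A d"
proof -
  have "{y. y \<in> A \<and> y + - d \<in> A} = (\<lambda>y. y + d) ` {y. y \<in> A \<and> y + d \<in> A}"
    by (auto simp: image_iff) (metis diff_add_cancel)
  then show ?thesis
    unfolding rep_def by (simp add: card_image)
qed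

lemma rep_diff_commute: "rep A (y - y') = rep A (y' - y)"
  by (metis minus_diff_eq rep_uminus)

lemma sum_pairs_of_bool_diff:
  assumes "finite A"
  shows "(\<Sum>b\<in>A. \<Sum>b'\<in>A. of_bool (b' - b = d)) = real (rep A d)"
proof -
  have "(b' - b = d) = (b' = b + d)" for b b'
    by (auto simp: algebra_simps)
  then have "(\<Sum>b'\<in>A. of_bool (b' - b = d)) = (of_bool (b + d \<in> A) :: real)" for b
    using assms by (simp add: of_bool_def sum.delta)
  then show ?thesis
    using assms by (simp add: rep_def Int_def)
qed

lemma sum_pairs_diff_eq_sum_rep:
  fixes G :: "'a::ab_group_add \<Rightarrow> real"
  assumes "finite A"
  shows "(\<Sum>b\<in>A. \<Sum>b'\<in>A. G (b' - b)) = (\<Sum>d\<in>diffset A A. real (rep A d) * G d)"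
proof -
  have "G (b' - b) = (\<Sum>d\<in>diffset A A. of_bool (b' - b = d) * G d)" if "b \<in> A" "b' \<in> A" for b b'
  proof -
    have "b' - b \<in> diffset A A"
      using that unfolding diffset_def by blast
    then show ?thesis
      using finite_diffset[OF assms assms] by (simp add: sum.delta flip: of_bool_def)
  qed
  then have "(\<Sum>b\<in>A. \<Sum>b'\<in>A. G (b' - b))
      = (\<Sum>d\<in>diffset A A. (\<Sum>b\<in>A. \<Sum>b'\<in>A. of_bool (b' - b = d)) * G d)"
    by (simp add: sum_distrib_right sum.swap[where A = "diffset A A"] cong: sum.cong)
  then show ?thesis
    by (simp add: sum_pairs_of_bool_diff[OF assms])
qed

lemma E3_eq_sum_pairs: "finite A \<Longrightarrow> real (E3 A) = (\<Sum>b\<in>A. \<Sum>b'\<in>A. real (rep A (b' - b))^2)"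
  using sum_pairs_diff_eq_sum_rep[of A "\<lambda>d. real (rep A d)^2"]
  by (simp add: E3_def power2_eq_square power3_eq_cube mult_ac)

lemma E4_eq_sum_pairs: "finite A \<Longrightarrow> real (E4 A) = (\<Sum>b\<in>A. \<Sum>b'\<in>A. real (rep A (b' - b))^3)"
  using sum_pairs_diff_eq_sum_rep[of A "\<lambda>d. real (rep A d)^3"]
  by (simp add: E4_def power3_eq_cube power4_eq_xxxx mult_ac)

lemma sum_rep_nonzero_diffs:
  assumes "finite A" "A \<noteq> {}"
  shows "(\<Sum>s\<in>diffset A A - {0}. real (rep A s)) = real (card A)^2 - real (card A)"
proof -
  have "0 \<in> diffset A A"
    using assms(2) unfolding diffset_def by force
  have "real (card A)^2 = (\<Sum>d\<in>diffset A A. real (rep A d))"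
    using sum_pairs_diff_eq_sum_rep[OF assms(1), of "\<lambda>_. 1"] by (simp add: power2_eq_square)
  also have "\<dots> = real (card A) + (\<Sum>s\<in>diffset A A - {0}. real (rep A s))"
    using sum.remove[OF finite_diffset[OF assms(1,1)] \<open>0 \<in> diffset A A\<close>, of "\<lambda>d. real (rep A d)"]
    by (simp add: rep_zero)
  finally show ?thesis
    by simp
qed

lemma sum_common_nonzero_shifts:
  assumes "finite A" "b \<in> A" "b' \<in> A"
  shows "(\<Sum>s\<in>diffset A A - {0}. of_bool (b + s \<in> A \<and> b' + s \<in> A)) = real (rep A (b' - b)) - 1"
proof -
  have "{s \<in> diffset A A - {0}. b + s \<in> A \<and> b' + s \<in> A}
      = (\<lambda>c. c - b) ` ({c \<in> A. c + (b' - b) \<in> A} - {b})"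
  proof (intro set_eqI iffI)
    fix s
    assume "s \<in> {s \<in> diffset A A - {0}. b + s \<in> A \<and> b' + s \<in> A}"
    then show "s \<in> (\<lambda>c. c - b) ` ({c \<in> A. c + (b' - b) \<in> A} - {b})"
      by (intro image_eqI[of _ _ "b + s"]) (auto simp: algebra_simps)
  next
    fix s
    assume "s \<in> (\<lambda>c. c - b) ` ({c \<in> A. c + (b' - b) \<in> A} - {b})"
    then obtain c where "c \<in> A" "c \<noteq> b" "c + (b' - b) \<in> A" "s = c - b"
      by auto
    then show "s \<in> {s \<in> diffset A A - {0}. b + s \<in> A \<and> b' + s \<in> A}"
      using assms(2) by (auto simp: diffset_def algebra_simps)
  qed
  moreover have "card ({c \<in> A. c + (b' - b) \<in> A} - {b}) = rep A (b' - b) - 1"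
    using assms by (simp add: rep_def card_Diff_singleton)
  ultimately have "card {s \<in> diffset A A - {0}. b + s \<in> A \<and> b' + s \<in> A} = rep A (b' - b) - 1"
    by (simp add: card_image)
  then show ?thesis
    using finite_diffset[OF assms(1,1)] rep_diff_pos[OF assms]
    by (simp add: of_bool_def Int_def of_nat_diff flip: sum.inter_filter)
qed

lemma sum_nonzero_shifts_sum_Ash_pairs:
  fixes F :: "'a::ab_group_add \<Rightarrow> 'a \<Rightarrow> real"
  assumes "finite A"
  shows "(\<Sum>s\<in>diffset A A - {0}. \<Sum>y\<in>Ash A s. \<Sum>y'\<in>Ash A s. F y y')
       = (\<Sum>b\<in>A. \<Sum>b'\<in>A. (real (rep A (b' - b)) - 1) * F b b')"
proof -
  have sum_Ash: "(\<Sum>y\<in>Ash A s. g y) = (\<Sum>y\<in>A. of_bool (y + s \<in> A) * g y)"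
    for g :: "'a \<Rightarrow> real" and s
    using assms by (simp add: Ash_eq Collect_conj_eq)
  have "(\<Sum>y\<in>Ash A s. \<Sum>y'\<in>Ash A s. F y y')
      = (\<Sum>b\<in>A. \<Sum>b'\<in>A. of_bool (b + s \<in> A \<and> b' + s \<in> A) * F b b')" for s
    by (simp add: sum_Ash of_bool_conj sum_distrib_left mult.assoc)
  then have "(\<Sum>s\<in>diffset A A - {0}. \<Sum>y\<in>Ash A s. \<Sum>y'\<in>Ash A s. F y y')
      = (\<Sum>b\<in>A. \<Sum>b'\<in>A. (\<Sum>s\<in>diffset A A - {0}. of_bool (b + s \<in> A \<and> b' + s \<in> A)) * F b b')"
    by (simp add: sum.swap[where A = "diffset A A - {0}"] sum_distrib_right)
  also have "\<dots> = (\<Sum>b\<in>A. \<Sum>b'\<in>A. (real (rep A (b' - b)) - 1) * F b b')"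
    using assms by (simp add: sum_common_nonzero_shifts)
  finally show ?thesis .
qed

definition sumset_by :: "('a::ab_group_add \<Rightarrow> 'a) \<Rightarrow> 'a set \<Rightarrow> 'a set \<Rightarrow> 'a set" where
  "sumset_by \<phi> X Y = (\<lambda>(x, y). x + \<phi> y) ` (X \<times> Y)"

definition collision_count :: "('a::ab_group_add \<Rightarrow> 'a) \<Rightarrow> 'a set \<Rightarrow> 'a set \<Rightarrow> real" where
  "collision_count \<phi> X Y = (\<Sum>y\<in>Y. \<Sum>y'\<in>Y. \<Sum>x\<in>X. \<Sum>x'\<in>X. of_bool (x + \<phi> y = x' + \<phi> y'))"

lemma sumset_eq_sumset_by_id: "sumset X Y = sumset_by id X Y"
  unfolding sumset_def sumset_by_def by force

lemma diffset_eq_sumset_by_uminus: "diffset X Y = sumset_by uminus X Y"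
  unfolding diffset_def sumset_by_def by force

lemma card_sumset_by_collision_count:
  assumes "finite X" "finite Y"
  shows "(real (card X) * real (card Y))^2 \<le> real (card (sumset_by \<phi> X Y)) * collision_count \<phi> X Y"
proof -
  let ?f = "\<lambda>(x, y). x + \<phi> y"
  have collisions: "(\<Sum>p\<in>X \<times> Y. \<Sum>q\<in>X \<times> Y. of_bool (?f p = ?f q)) = collision_count \<phi> X Y"
  proof -
    have "(\<Sum>p\<in>X \<times> Y. \<Sum>q\<in>X \<times> Y. of_bool (?f p = ?f q))
      = (\<Sum>x\<in>X. \<Sum>y\<in>Y. \<Sum>x'\<in>X. \<Sum>y'\<in>Y. of_bool (x + \<phi> y = x' + \<phi> y'))"
      unfolding sum.cartesian_product' by simp
    also have "\<dots> = (\<Sum>y\<in>Y. \<Sum>x\<in>X. \<Sum>y'\<in>Y. \<Sum>x'\<in>X. of_bool (x + \<phi> y = x' + \<phi> y'))"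
      by (subst sum.swap) (simp only: sum.swap[of _ X Y])
    also have "\<dots> = collision_count \<phi> X Y"
      unfolding collision_count_def by (simp only: sum.swap[of _ X Y])
    finally show ?thesis .
  qed
  show ?thesis
    using card_squared_le_card_image_mult_collisions[of "X \<times> Y" ?f] assms
    unfolding collisions by (simp add: sumset_by_def card_cartesian_product)
qed

lemma additive_add_eq_add_iff:
  "additive \<phi> \<Longrightarrow> (x + \<phi> y = x' + \<phi> y') = (x' - x = \<phi> (y - y'))"
  unfolding additive.diff by (auto simp: algebra_simps)

lemma collision_count_A_Ash:
  assumes "finite A" "additive \<phi>" "\<And>x. rep A (\<phi> x) = rep A x"
  shows "collision_count \<phi> A (Ash A s) = (\<Sum>y\<in>Ash A s. \<Sum>y'\<in>Ash A s. real (rep A (y' - y)))"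
  unfolding collision_count_def additive_add_eq_add_iff[OF assms(2)]
  by (simp add: sum_pairs_of_bool_diff[OF assms(1)] assms(3) rep_diff_commute)

lemma sum_collision_count_A_Ash:
  assumes "finite A" "additive \<phi>" "\<And>x. rep A (\<phi> x) = rep A x"
  shows "(\<Sum>s\<in>diffset A A - {0}. collision_count \<phi> A (Ash A s))
       = (\<Sum>b\<in>A. \<Sum>b'\<in>A. (real (rep A (b' - b)) - 1) * real (rep A (b' - b)))"
  unfolding collision_count_A_Ash[OF assms]
  by (rule sum_nonzero_shifts_sum_Ash_pairs[OF assms(1)])

lemma sum_collision_count_Ash_Ash:
  assumes "finite A" "additive \<phi>" "\<And>x. rep A (\<phi> x) = rep A x"
  shows "(\<Sum>s\<in>diffset A A - {0}. \<Sum>t\<in>diffset A A - {0}. collision_count \<phi> (Ash A s) (Ash A t))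
       = (\<Sum>b\<in>A. \<Sum>b'\<in>A. (real (rep A (b' - b)) - 1)^2 * real (rep A (b' - b)))"
proof -
  let ?D = "diffset A A - {0}"
  let ?r = "\<lambda>d. real (rep A d)"
  have inner: "(\<Sum>b\<in>A. \<Sum>b'\<in>A. (?r (b' - b) - 1) * of_bool (b + \<phi> c = b' + \<phi> c'))
      = (?r (c' - c) - 1) * ?r (c' - c)" for c c'
  proof -
    have "(\<Sum>b\<in>A. \<Sum>b'\<in>A. (?r (b' - b) - 1) * of_bool (b + \<phi> c = b' + \<phi> c'))
        = (\<Sum>b\<in>A. \<Sum>b'\<in>A. of_bool (b' - b = \<phi> (c - c')) * (?r (\<phi> (c - c')) - 1))"
      unfolding additive_add_eq_add_iff[OF assms(2)] by (intro sum.cong refl) auto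
    also have "\<dots> = ?r (\<phi> (c - c')) * (?r (\<phi> (c - c')) - 1)"
      by (simp add: sum_distrib_right[symmetric] sum_pairs_of_bool_diff[OF assms(1)])
    finally show ?thesis
      by (simp add: assms(3) rep_diff_commute mult.commute)
  qed
  have "(\<Sum>s\<in>?D. \<Sum>t\<in>?D. collision_count \<phi> (Ash A s) (Ash A t))
      = (\<Sum>t\<in>?D. \<Sum>c\<in>Ash A t. \<Sum>c'\<in>Ash A t.
           \<Sum>s\<in>?D. \<Sum>b\<in>Ash A s. \<Sum>b'\<in>Ash A s. of_bool (b + \<phi> c = b' + \<phi> c'))"
    unfolding collision_count_def
    by (subst sum.swap) (simp only: sum.swap[where A = ?D])
  also have "\<dots> = (\<Sum>t\<in>?D. \<Sum>c\<in>Ash A t. \<Sum>c'\<in>Ash A t. (?r (c' - c) - 1) * ?r (c' - c))"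
    by (simp only: sum_nonzero_shifts_sum_Ash_pairs[OF assms(1)] inner)
  also have "\<dots> = (\<Sum>b\<in>A. \<Sum>b'\<in>A. (?r (b' - b) - 1)^2 * ?r (b' - b))"
    by (simp add: sum_nonzero_shifts_sum_Ash_pairs[OF assms(1)] power2_eq_square mult_ac)
  finally show ?thesis .
qed

lemma collision_count_nonneg: "0 \<le> collision_count \<phi> X Y"
  unfolding collision_count_def by (intro sum_nonneg) simp

lemma sum_pairs_pred_rep_power_le:
  assumes "finite A"
  shows "real (card A)^k * (\<Sum>b\<in>A. \<Sum>b'\<in>A. (real (rep A (b' - b)) - 1)^k * real (rep A (b' - b)))
       \<le> (real (card A) - 1)^k * (\<Sum>b\<in>A. \<Sum>b'\<in>A. real (rep A (b' - b))^(k + 1))"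
  unfolding sum_distrib_left
proof (intro sum_mono)
  fix b b' assume "b \<in> A" "b' \<in> A"
  then show "real (card A)^k * ((real (rep A (b' - b)) - 1)^k * real (rep A (b' - b)))
      \<le> (real (card A) - 1)^k * real (rep A (b' - b))^(k + 1)"
    using rep_diff_pos[OF assms] rep_le_card[OF assms]
    by (intro pred_ratio_power_le) (simp_all add: Suc_le_eq)
qed

lemma sum_card_sumset_by_Ash_ge:
  assumes "finite A" "2 \<le> card A" "additive \<phi>" "\<And>x. rep A (\<phi> x) = rep A x"
  shows "real (card A)^6 / (2 * real (E3 A))
       \<le> (\<Sum>s\<in>diffset A A - {0}. real (card (sumset_by \<phi> A (Ash A s))))"
proof -
  let ?D = "diffset A A - {0}"
  define n where "n = real (card A)"
  have "A \<noteq> {}"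
    using assms(2) by auto
  have "(\<Sum>s\<in>?D. n * real (rep A s)) = n * (n^2 - n)"
    using sum_rep_nonzero_diffs[OF assms(1) \<open>A \<noteq> {}\<close>] by (auto simp: n_def simp flip: sum_distrib_left)
  then have "n^2 * (n - 1)^1 = (\<Sum>s\<in>?D. n * real (rep A s))"
    by (simp add: power2_eq_square algebra_simps)
  then have "(n^2 * (n - 1)^1)^2
      \<le> (\<Sum>s\<in>?D. real (card (sumset_by \<phi> A (Ash A s)))) * (\<Sum>s\<in>?D. collision_count \<phi> A (Ash A s))"
    using card_sumset_by_collision_count[OF assms(1) finite_Ash[OF assms(1)]]
    by (simp only:) (rule Cauchy_Schwarz_ineq_sum_pointwise, simp_all add: n_def card_Ash collision_count_nonneg)
  moreover have "n^1 * (\<Sum>s\<in>?D. collision_count \<phi> A (Ash A s)) \<le> (n - 1)^1 * real (E3 A)"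
    using sum_pairs_pred_rep_power_le[OF assms(1), of 1]
    by (simp add: sum_collision_count_A_Ash[OF assms(1,3,4)] E3_eq_sum_pairs[OF assms(1)] n_def
        power2_eq_square)
  ultimately show ?thesis
    using le_of_Cauchy_Schwarz_and_energy_bounds[of n _ "real (E3 A)" 1] assms(2)
    by (simp add: n_def sum_nonneg)
qed

lemma sum_card_sumset_by_Ash_Ash_ge:
  assumes "finite A" "2 \<le> card A" "additive \<phi>" "\<And>x. rep A (\<phi> x) = rep A x"
  shows "real (card A)^8 / (4 * real (E4 A))
       \<le> (\<Sum>s\<in>diffset A A - {0}. \<Sum>t\<in>diffset A A - {0}. real (card (sumset_by \<phi> (Ash A s) (Ash A t))))"
proof -
  let ?D = "diffset A A - {0}"
  define n where "n = real (card A)"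
  have "A \<noteq> {}"
    using assms(2) by auto
  have "(\<Sum>p\<in>?D \<times> ?D. real (rep A (fst p)) * real (rep A (snd p))) = (n^2 - n)^2"
    using sum_rep_nonzero_diffs[OF assms(1) \<open>A \<noteq> {}\<close>]
    by (auto simp: n_def sum.cartesian_product' power2_eq_square simp flip: sum_product)
  then have "n^2 * (n - 1)^2 = (\<Sum>p\<in>?D \<times> ?D. real (rep A (fst p)) * real (rep A (snd p)))"
    by (simp add: power2_eq_square algebra_simps)
  then have "(n^2 * (n - 1)^2)^2
      \<le> (\<Sum>p\<in>?D \<times> ?D. real (card (sumset_by \<phi> (Ash A (fst p)) (Ash A (snd p)))))
        * (\<Sum>p\<in>?D \<times> ?D. collision_count \<phi> (Ash A (fst p)) (Ash A (snd p)))"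
    using card_sumset_by_collision_count[OF finite_Ash[OF assms(1)] finite_Ash[OF assms(1)]]
    by (simp only:) (rule Cauchy_Schwarz_ineq_sum_pointwise, simp_all add: card_Ash collision_count_nonneg)
  moreover have "n^2 * (\<Sum>s\<in>?D. \<Sum>t\<in>?D. collision_count \<phi> (Ash A s) (Ash A t)) \<le> (n - 1)^2 * real (E4 A)"
    using sum_pairs_pred_rep_power_le[OF assms(1), of 2]
    by (simp add: sum_collision_count_Ash_Ash[OF assms(1,3,4)] E4_eq_sum_pairs[OF assms(1)] n_def)
  ultimately show ?thesis
    using le_of_Cauchy_Schwarz_and_energy_bounds[of n _ "real (E4 A)" 2] assms(2)
    by (simp add: n_def sum_nonneg sum.cartesian_product')
qed

theorem corollary3p2:
  fixes A :: "'a::ab_group_add set"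
  assumes "finite A" and "card A \<ge> 2"
  defines "D \<equiv> diffset A A - {0}"
  shows "(\<Sum>s\<in>D. real (card (sumset A (Ash A s)))) \<ge> real (card A) ^ 6 / (2 * real (E3 A))
       \<and> (\<Sum>s\<in>D. real (card (diffset A (Ash A s)))) \<ge> real (card A) ^ 6 / (2 * real (E3 A))
       \<and> (\<Sum>s\<in>D. \<Sum>t\<in>D. real (card (sumset (Ash A s) (Ash A t)))) \<ge> real (card A) ^ 8 / (4 * real (E4 A))
       \<and> (\<Sum>s\<in>D. \<Sum>t\<in>D. real (card (diffset (Ash A s) (Ash A t)))) \<ge> real (card A) ^ 8 / (4 * real (E4 A))
       \<and> (\<exists>s\<in>D. real (card (diffset A (Ash A s)))
              \<ge> real (card A) ^ 6 / (2 * real (E3 A) * real (card (diffset A A))))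
       \<and> (\<exists>s\<in>D. \<exists>t\<in>D. real (card (diffset (Ash A s) (Ash A t)))
              \<ge> real (card A) ^ 8 / (4 * real (E4 A) * real (card (diffset A A)) ^ 2))"
proof -
  have id: "additive (id :: 'a \<Rightarrow> 'a)" "\<And>x. rep A (id x) = rep A x"
    by (simp_all add: additive_def)
  have uminus: "additive (uminus :: 'a \<Rightarrow> 'a)" "\<And>x. rep A (- x) = rep A x"
    by (simp_all add: additive_def rep_uminus)
  note sumset_bound = sum_card_sumset_by_Ash_ge[OF assms(1,2) id, folded sumset_eq_sumset_by_id D_def]
  note diffset_bound = sum_card_sumset_by_Ash_ge[OF assms(1,2) uminus, folded diffset_eq_sumset_by_uminus D_def]
  note sumset_Ash_bound = sum_card_sumset_by_Ash_Ash_ge[OF assms(1,2) id, folded sumset_eq_sumset_by_id D_def]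
  note diffset_Ash_bound =
    sum_card_sumset_by_Ash_Ash_ge[OF assms(1,2) uminus, folded diffset_eq_sumset_by_uminus D_def]
  have "D \<noteq> {}"
    unfolding D_def using nonzero_diffs_nonempty[OF assms(2)] .
  have "finite D" "card D \<le> card (diffset A A)"
    unfolding D_def using finite_diffset[OF assms(1,1)] by (simp_all add: card_mono)
  then have "real (card (D \<times> D)) \<le> real (card (diffset A A))^2"
    by (simp add: card_cartesian_product power2_eq_square mult_mono)
  then have "\<exists>p\<in>D \<times> D. real (card A)^8 / (4 * real (E4 A)) / real (card (diffset A A))^2
      \<le> real (card (diffset (Ash A (fst p)) (Ash A (snd p))))"
    using diffset_Ash_bound \<open>finite D\<close> \<open>D \<noteq> {}\<close>
    by (intro exists_ge_average) (simp_all add: sum.cartesian_product')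
  moreover have "\<exists>s\<in>D. real (card A)^6 / (2 * real (E3 A)) / real (card (diffset A A))
      \<le> real (card (diffset A (Ash A s)))"
    using diffset_bound \<open>finite D\<close> \<open>D \<noteq> {}\<close> \<open>card D \<le> card (diffset A A)\<close>
    by (intro exists_ge_average) simp_all
  ultimately show ?thesis
    using sumset_bound diffset_bound sumset_Ash_bound diffset_Ash_bound
    by (auto simp: divide_divide_eq_left)
qed

end
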